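(* The representation $\rho$ in the following setting is reducible if and only if $w\ne-2$. Setting: $q$ a root of unity with $n$ odd and $q^4\ne1$ ($N=n$ odd), $\bar N=(N-1)/2$, $k\in\mathbb Z$, $w=-q^{2k}-q^{-2k}$; $V$ has basis $\{u_i:-\bar N\le i\le\bar N\}$, with $u^*_i=u_{-\bar N}$ for $i<-\bar N$, $u^*_i=u_i$ for $|i|\le\bar N$, $u^*_i=u_{\bar N}$ for $i>\bar N$; $\lambda_i=q^{2i}+q^{-2i}$, and for $i\ne0$: $s_i=\frac{q^{2i-k+1}-q^{-2i+k-1}}{q^{2i}-q^{-2i}}$, $s'_i=\frac{q^{2i+2}-q^{-2i-2}}{q^{2i}-q^{-2i}}s_i$, $\beta_i=\frac{2q^{k-1}-2q^{-k+1}}{(q^{2i}-q^{-2i})^3}$; $\rho$ is the representation of $\mathcal S_q(\Sigma_{1,1})$ with $\rho(\alpha_0)u_i=\lambda_iu_i$ ($-\bar N\le i\le0$), $\rho(\alpha_0)u_i=\lambda_iu_i+u_{-i}$ ($0<i\le\bar N$), $\rho(\alpha_\infty)u_i=s_iu_{i+1}+s_{-i}u^*_{i-1}$ ($-\bar N\le i<0$), $\rho(\alpha_\infty)u_0=(q^{k-1}+q^{-k+1})u_{-1}+(q^2-q^{-2})(q^{-k+1}-q^{k-1})u_1$, $\rho(\alpha_\infty)u_i=\beta_iu^*_{-i-1}-\beta_iu_{-i+1}+s'_{-i}u_{i-1}+s'_iu^*_{i+1}$ ($0<i\le\bar N$).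
   Context: $\mathcal S_q(\Sigma_{1,1})$ is the Kauffman bracket skein algebra of the one-punctured torus, generated by the slope $0,1,\infty$ curves $\alpha_0,\alpha_1,\alpha_\infty$; when $q^4\ne1$ a representation is determined by the images of $\alpha_0$ and $\alpha_\infty$. For $q$ a root of unity, $n=\mathrm{ord}(q^2)$ and $N=\mathrm{ord}(q^4)$. (The formulas above are known to define a representation.) *)

theory Defs
  imports Complex_Main
begin

definition mult_ord :: "complex \<Rightarrow> nat" where
  "mult_ord z = (LEAST m. m > 0 \<and> z ^ m = 1)"

(* Vectors of V are functions int => complex supported on {-Nb..Nb};
   u_i is the standard basis vector *)
definition ub :: "int \<Rightarrow> int \<Rightarrow> complex" where
  "ub i = (\<lambda>j. if j = i then 1 else 0)"

definition ustar :: "int \<Rightarrow> int \<Rightarrow> int \<Rightarrow> complex" where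
  "ustar Nb i = ub (if i < - Nb then - Nb else if i > Nb then Nb else i)"

definition Vsp :: "int \<Rightarrow> (int \<Rightarrow> complex) set" where
  "Vsp Nb = {v. \<forall>j. (j < - Nb \<or> j > Nb) \<longrightarrow> v j = 0}"

(* the linear operator determined by the images img i of the basis vectors u_i *)
definition lin_op :: "int \<Rightarrow> (int \<Rightarrow> int \<Rightarrow> complex) \<Rightarrow> (int \<Rightarrow> complex) \<Rightarrow> (int \<Rightarrow> complex)" where
  "lin_op Nb img v = (\<lambda>j. \<Sum>i\<in>{-Nb..Nb}. v i * img i j)"

definition lam :: "complex \<Rightarrow> int \<Rightarrow> complex" where
  "lam q i = q powi (2*i) + q powi (-2*i)"

definition sc :: "complex \<Rightarrow> int \<Rightarrow> int \<Rightarrow> complex" where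
  "sc q k i = (q powi (2*i - k + 1) - q powi (-2*i + k - 1)) / (q powi (2*i) - q powi (-2*i))"

definition sc' :: "complex \<Rightarrow> int \<Rightarrow> int \<Rightarrow> complex" where
  "sc' q k i = (q powi (2*i + 2) - q powi (-2*i - 2)) / (q powi (2*i) - q powi (-2*i)) * sc q k i"

definition beta :: "complex \<Rightarrow> int \<Rightarrow> int \<Rightarrow> complex" where
  "beta q k i = (2 * q powi (k - 1) - 2 * q powi (-k + 1)) / (q powi (2*i) - q powi (-2*i)) ^ 3"

definition rho0_img :: "complex \<Rightarrow> int \<Rightarrow> int \<Rightarrow> complex" where
  "rho0_img q i =
     (if i \<le> 0 then (\<lambda>j. lam q i * ub i j)
      else (\<lambda>j. lam q i * ub i j + ub (-i) j))"

definition rhoInf_img :: "complex \<Rightarrow> int \<Rightarrow> int \<Rightarrow> int \<Rightarrow> int \<Rightarrow> complex" where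
  "rhoInf_img q k Nb i =
     (if i < 0 then (\<lambda>j. sc q k i * ub (i + 1) j + sc q k (-i) * ustar Nb (i - 1) j)
      else if i = 0 then (\<lambda>j. (q powi (k - 1) + q powi (-k + 1)) * ub (-1) j
                + (q powi 2 - q powi (-2)) * (q powi (-k + 1) - q powi (k - 1)) * ub 1 j)
      else (\<lambda>j. beta q k i * ustar Nb (-i - 1) j - beta q k i * ub (-i + 1) j
                + sc' q k (-i) * ub (i - 1) j + sc' q k i * ustar Nb (i + 1) j))"

definition is_lin_subspace :: "(int \<Rightarrow> complex) set \<Rightarrow> bool" where
  "is_lin_subspace W \<longleftrightarrow> (\<lambda>j. 0) \<in> W \<and> (\<forall>v\<in>W. \<forall>w\<in>W. (\<lambda>j. v j + w j) \<in> W)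
     \<and> (\<forall>c. \<forall>v\<in>W. (\<lambda>j. c * v j) \<in> W)"

(* reducibility: a nonzero proper subspace of V invariant under rho(alpha_0) and rho(alpha_infinity)
   (hence under the whole image of the skein algebra, since these generate it when q^4 \<noteq> 1) *)
definition reducible_rep :: "int \<Rightarrow> (int \<Rightarrow> int \<Rightarrow> complex) \<Rightarrow> (int \<Rightarrow> int \<Rightarrow> complex) \<Rightarrow> bool" where
  "reducible_rep Nb A B \<longleftrightarrow> (\<exists>W. W \<subseteq> Vsp Nb \<and> is_lin_subspace W \<and> W \<noteq> {\<lambda>j. 0} \<and> W \<noteq> Vsp Nb
      \<and> (\<forall>v\<in>W. lin_op Nb A v \<in> W) \<and> (\<forall>v\<in>W. lin_op Nb B v \<in> W))"

end

theory Submission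
  imports Defs
begin

text \<open>
  When \<open>q\<^sup>2\<close> has odd order \<open>N = 2 N\<^sub>b + 1\<close>, the condition \<open>w = -2\<close> says exactly that
  \<open>N\<close> divides \<open>k\<close>.
  If it does not, then \<open>2m - k + 1 \<equiv> 0 (mod N)\<close> for some \<open>-N\<^sub>b \<le> m < N\<^sub>b\<close>. This kills
  \<open>s\<^sub>m\<close> and \<open>s'\<^sub>m\<close> (for \<open>m = 0\<close>, the \<open>u\<^sub>1\<close>-coefficient of \<open>\<rho>(\<alpha>\<^sub>\<infinity>) u\<^sub>0\<close>), so the span of
  \<open>u\<^sub>-\<^sub>N\<^sub>b, \<dots>, u\<^sub>m\<close> is a proper invariant subspace.
  If \<open>N\<close> divides \<open>k\<close>, all structure constants are nonzero. The eigenvalues \<open>\<lambda>\<^sub>i\<close> of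
  \<open>\<rho>(\<alpha>\<^sub>0)\<close> identify \<open>i\<close> only with \<open>-i\<close>, so a nonzero invariant subspace contains some
  \<open>u\<^sub>-\<^sub>j\<close>. Applying \<open>\<rho>(\<alpha>\<^sub>\<infinity>)\<close> and peeling off known components with \<open>\<rho>(\<alpha>\<^sub>0) - \<lambda>\<close>
  then produces every basis vector.
\<close>

section \<open>Orders of roots of unity\<close>

lemma mult_ord_root_of_unity:
  assumes "\<exists>m>0. z ^ m = (1::complex)"
  shows "mult_ord z > 0" and "z ^ mult_ord z = 1"
    and "0 < j \<Longrightarrow> j < mult_ord z \<Longrightarrow> z ^ j \<noteq> 1"
proof -
  have "mult_ord z > 0 \<and> z ^ mult_ord z = 1"
    unfolding mult_ord_def using LeastI_ex[where P = "\<lambda>m. m > 0 \<and> z ^ m = 1"] assms by blast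
  then show "mult_ord z > 0" and "z ^ mult_ord z = 1" by auto
  show "0 < j \<Longrightarrow> j < mult_ord z \<Longrightarrow> z ^ j \<noteq> 1"
    using not_less_Least[where P = "\<lambda>m. m > 0 \<and> z ^ m = 1"] unfolding mult_ord_def by blast
qed

lemma power_int_eq_1_iff_dvd:
  assumes "(z::complex) ^ N = 1" and "N > 0" and "\<And>j. 0 < j \<Longrightarrow> j < N \<Longrightarrow> z ^ j \<noteq> 1"
  shows "z powi e = 1 \<longleftrightarrow> int N dvd e"
proof -
  have "z \<noteq> 0" using assms(1,2) by (metis power_0_left zero_neq_one not_gr0)
  have e: "e = int N * (e div int N) + e mod int N" by simp
  have "z powi e = (z powi int N) powi (e div int N) * z powi (e mod int N)"
    by (subst e, subst power_int_add) (simp_all add: \<open>z \<noteq> 0\<close> power_int_mult)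
  also have "\<dots> = z ^ nat (e mod int N)"
    using assms(1,2) by (simp add: power_int_nonneg_exp[of "e mod int N"])
  finally have reduced: "z powi e = z ^ nat (e mod int N)" .
  have "nat (e mod int N) < N" using assms(2) by (simp add: nat_less_iff)
  then have "z powi e = 1 \<longleftrightarrow> nat (e mod int N) = 0"
    using reduced assms(3) by (metis not_gr0 power_0)
  also have "\<dots> \<longleftrightarrow> int N dvd e" using assms(2) by (simp add: dvd_eq_mod_eq_0 nat_eq_iff)
  finally show ?thesis .
qed

lemma mult_ord_square:
  assumes root: "\<exists>m>0. z ^ m = (1::complex)" and odd: "odd (mult_ord z)"
  shows "mult_ord (z ^ 2) = mult_ord z"
proof -
  define n where "n = mult_ord z"
  define N where "N = mult_ord (z ^ 2)"
  have root2: "\<exists>m>0. (z ^ 2) ^ m = (1::complex)"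
    using root by (metis power_one power_mult mult.commute)
  note ord_z = mult_ord_root_of_unity[OF root, folded n_def]
  note ord_z2 = mult_ord_root_of_unity[OF root2, folded N_def]
  have "(z ^ 2) ^ n = 1" using ord_z(2) by (metis power_one power_mult mult.commute)
  then have "N \<le> n" using ord_z2(3) ord_z(1) by (meson not_le)
  obtain r where r: "n = 2 * r + 1" using odd n_def oddE by blast
  have "z ^ (N * n) = 1" using ord_z(2) by (metis power_one power_mult mult.commute)
  moreover have "z ^ (N * n) = z ^ N * (z ^ (2 * N)) ^ r"
    by (simp add: r power_add power_mult[symmetric] algebra_simps)
  moreover have "z ^ (2 * N) = 1" using ord_z2(2) by (simp add: power_mult)
  ultimately have "z ^ N = 1" by simp
  then have "n \<le> N" using ord_z(3) ord_z2(1) by (meson not_le)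
  with \<open>N \<le> n\<close> show ?thesis unfolding n_def N_def by simp
qed

lemma lin_op_ub: "-Nb \<le> i \<Longrightarrow> i \<le> Nb \<Longrightarrow> lin_op Nb img (ub i) = img i"
  unfolding lin_op_def ub_def by (simp add: if_distrib[of "\<lambda>c. c * _"] sum.delta' cong: if_cong)

lemma lin_op_rho0_apply:
  "lin_op Nb (rho0_img q) x j =
     (if -Nb \<le> j \<and> j \<le> Nb then lam q j * x j + (if j < 0 then x (-j) else 0) else 0)"
proof -
  have img: "rho0_img q i j = (if i = j then lam q i else 0) + (if i = -j \<and> 0 < i then 1 else 0)" for i
    by (auto simp: rho0_img_def ub_def)
  have "lin_op Nb (rho0_img q) x j = (\<Sum>i\<in>{-Nb..Nb}. if i = j then x i * lam q i else 0)
        + (\<Sum>i\<in>{-Nb..Nb}. if i = -j then (if 0 < i then x i else 0) else 0)"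
    unfolding lin_op_def img distrib_left sum.distrib by (intro arg_cong2[where f = "(+)"] sum.cong) auto
  then show ?thesis by (simp add: sum.delta' mult.commute)
qed

definition span_upto :: "int \<Rightarrow> int \<Rightarrow> (int \<Rightarrow> complex) set" where
  "span_upto Nb m = {v. \<forall>j. j < -Nb \<or> m < j \<longrightarrow> v j = 0}"

lemma lin_op_span_upto:
  assumes "\<And>i. -Nb \<le> i \<Longrightarrow> i \<le> m \<Longrightarrow> img i \<in> span_upto Nb m" and "v \<in> span_upto Nb m"
  shows "lin_op Nb img v \<in> span_upto Nb m"
proof -
  have "v i * img i j = 0" if "j < -Nb \<or> m < j" and "-Nb \<le> i" for i j
    using assms that unfolding span_upto_def by (cases "i \<le> m") auto
  then show ?thesis unfolding span_upto_def lin_op_def by (auto intro!: sum.neutral)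
qed

lemma ub_in_span_upto: "-Nb \<le> i \<Longrightarrow> i \<le> m \<Longrightarrow> ub i \<in> span_upto Nb m"
  by (simp add: span_upto_def ub_def)

lemma lam_uminus: "lam q (-a) = lam q a"
  by (simp add: lam_def add.commute)

lemma lin_subspace_lincomb: "is_lin_subspace W \<Longrightarrow> v \<in> W \<Longrightarrow> w \<in> W \<Longrightarrow> (\<lambda>j. c * v j + d * w j) \<in> W"
  unfolding is_lin_subspace_def by metis

lemma lin_subspace_sum:
  assumes "is_lin_subspace W" and "finite S" and "\<And>i. i \<in> S \<Longrightarrow> f i \<in> W"
  shows "(\<lambda>j. \<Sum>i\<in>S. c i * f i j) \<in> W"
  using assms(2,3)
proof (induction S rule: finite_induct)
  case empty
  then show ?case using assms(1) by (simp add: is_lin_subspace_def)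
next
  case (insert i S)
  then have "(\<lambda>j. 1 * (\<Sum>i\<in>S. c i * f i j) + c i * f i j) \<in> W"
    using lin_subspace_lincomb[OF assms(1)] by blast
  then show ?case using insert by (simp add: add.commute)
qed

lemma lin_subspace_mem_if_support:
  assumes W: "is_lin_subspace W" and v: "v \<in> Vsp Nb" and supp: "\<And>j. v j \<noteq> 0 \<Longrightarrow> ub j \<in> W"
  shows "v \<in> W"
proof -
  define S where "S = {i \<in> {-Nb..Nb}. v i \<noteq> 0}"
  have "finite S" unfolding S_def by (rule finite_subset[of _ "{-Nb..Nb}"]) auto
  have "v = (\<lambda>j. \<Sum>i\<in>S. v i * ub i j)"
  proof
    fix j
    have "(\<Sum>i\<in>S. v i * ub i j) = (if j \<in> S then v j else 0)"
      using \<open>finite S\<close> by (simp add: ub_def if_distrib[of "\<lambda>c. _ * c"] sum.delta' cong: if_cong)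
    then show "v j = (\<Sum>i\<in>S. v i * ub i j)" using v by (auto simp: S_def Vsp_def)
  qed
  also have "\<dots> \<in> W" using W supp \<open>finite S\<close> by (intro lin_subspace_sum) (auto simp: S_def)
  finally show ?thesis .
qed

definition rho0_shift :: "int \<Rightarrow> complex \<Rightarrow> complex \<Rightarrow> (int \<Rightarrow> complex) \<Rightarrow> int \<Rightarrow> complex" where
  "rho0_shift Nb q \<mu> x = (\<lambda>j. lin_op Nb (rho0_img q) x j - \<mu> * x j)"

lemma rho0_shift_apply:
  "x \<in> Vsp Nb \<Longrightarrow> rho0_shift Nb q \<mu> x j =
     (if -Nb \<le> j \<and> j \<le> Nb then (lam q j - \<mu>) * x j + (if j < 0 then x (-j) else 0) else 0)"
  unfolding rho0_shift_def lin_op_rho0_apply Vsp_def by (auto simp: algebra_simps)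

lemma rho0_shift_Vsp: "x \<in> Vsp Nb \<Longrightarrow> rho0_shift Nb q \<mu> x \<in> Vsp Nb"
  by (simp add: Vsp_def rho0_shift_apply)

locale odd_order_root =
  fixes q :: complex and N :: nat and Nb :: int
  assumes powi_eq_1_iff: "(q ^ 2) powi e = 1 \<longleftrightarrow> int N dvd e"
    and N_eq: "int N = 2 * Nb + 1"
    and Nb_pos: "Nb \<ge> 1"

lemma odd_order_root_if_odd_mult_ord:
  fixes q :: complex and n N :: nat and Nb :: int
  assumes root: "\<exists>m>0. q ^ m = (1::complex)"
    and n: "n = mult_ord (q ^ 2)" and N: "N = mult_ord (q ^ 4)"
    and "odd n" and "q ^ 4 \<noteq> 1"
    and Nb: "Nb = (int N - 1) div 2"
  shows "odd_order_root q N Nb"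
proof -
  have root2: "\<exists>m>0. (q ^ 2) ^ m = (1::complex)"
    using root by (metis power_one power_mult mult.commute)
  have "q ^ 4 = (q ^ 2) ^ 2" by simp
  then have "N = n" using mult_ord_square[OF root2] \<open>odd n\<close> n N by simp
  note ord = mult_ord_root_of_unity[OF root2, folded n, folded \<open>N = n\<close>]
  have "(q ^ 4) ^ N = 1"
    using ord(2) \<open>q ^ 4 = (q ^ 2) ^ 2\<close> by (metis power_one power_mult mult.commute)
  then have "N \<noteq> 1" using \<open>q ^ 4 \<noteq> 1\<close> by auto
  then have "N \<ge> 3" using \<open>odd n\<close> \<open>N = n\<close> ord(1) by presburger
  have "int N = 2 * ((int N - 1) div 2) + 1" using \<open>odd n\<close> \<open>N = n\<close> by (auto elim!: oddE)
  show ?thesis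
  proof
    show "(q ^ 2) powi e = 1 \<longleftrightarrow> int N dvd e" for e
      by (rule power_int_eq_1_iff_dvd[OF ord(2) ord(1) ord(3)])
    show "int N = 2 * Nb + 1" using Nb \<open>int N = 2 * ((int N - 1) div 2) + 1\<close> by simp
    show "Nb \<ge> 1" using Nb \<open>N \<ge> 3\<close> by simp
  qed
qed

context odd_order_root
begin

lemma q_nonzero: "q \<noteq> 0"
proof
  assume "q = 0"
  moreover have "(q ^ 2) powi int N = 1" by (simp only: powi_eq_1_iff dvd_refl)
  moreover have "N > 0" using N_eq Nb_pos by simp
  ultimately show False by (simp add: power_0_left)
qed

lemma powi_double: "q powi (2 * e) = (q ^ 2) powi e"
  by (simp add: power_int_mult)

lemma dvd_small_imp_zero: "int N dvd d \<Longrightarrow> \<bar>d\<bar> < int N \<Longrightarrow> d = 0"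
  by (metis dvd_imp_le_int abs_ge_self leD less_le_trans)

lemma powi_eq_powi_uminus_iff: "q powi e = q powi (-e) \<longleftrightarrow> int N dvd e"
proof -
  have "q powi (-e) = inverse (q powi e)" by (simp add: power_int_minus)
  moreover have "q powi e \<noteq> 0" using q_nonzero by simp
  ultimately have "q powi e = q powi (-e) \<longleftrightarrow> q powi e * q powi e = 1"
    by (metis inverse_unique right_inverse)
  also have "q powi e * q powi e = q powi (2 * e)"
    unfolding mult_2 using q_nonzero by (intro power_int_add[symmetric]) simp
  finally show ?thesis using powi_eq_1_iff powi_double by simp
qed

lemma powi_ne_powi_uminus: "0 < \<bar>e\<bar> \<Longrightarrow> \<bar>e\<bar> < int N \<Longrightarrow> q powi e \<noteq> q powi (-e)"
  using powi_eq_powi_uminus_iff dvd_small_imp_zero by fastforce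

lemma lam_eq_lam_imp:
  assumes "\<bar>a\<bar> \<le> Nb" and "\<bar>b\<bar> \<le> Nb" and "lam q a = lam q b"
  shows "a = b \<or> a = -b"
proof -
  define z where "z = q ^ 2"
  define x where "x = z powi a"
  define y where "y = z powi b"
  have "z \<noteq> 0" using q_nonzero by (simp add: z_def)
  then have "x \<noteq> 0" "y \<noteq> 0" by (simp_all add: x_def y_def)
  have "x + inverse x = y + inverse y"
    using assms(3) powi_double[of a] powi_double[of "-a"] powi_double[of b] powi_double[of "-b"]
    unfolding lam_def x_def y_def z_def by (simp add: power_int_minus)
  then have "(x - y) * (x * y - 1) = 0"
    using \<open>x \<noteq> 0\<close> \<open>y \<noteq> 0\<close> by (simp add: field_simps)
  then have "x = y \<or> x * y = 1" by simp
  then have "z powi (a - b) = 1 \<or> z powi (a + b) = 1"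
    using \<open>z \<noteq> 0\<close> power_int_diff[of z a b] power_int_add[of z a b] \<open>y \<noteq> 0\<close>
    by (auto simp: x_def y_def)
  then have "int N dvd (a - b) \<or> int N dvd (a + b)" by (simp add: z_def powi_eq_1_iff)
  moreover have "\<bar>a - b\<bar> < int N" "\<bar>a + b\<bar> < int N" using assms(1,2) N_eq by linarith+
  ultimately show ?thesis using dvd_small_imp_zero by force
qed

lemma w_eq_neg2_iff: "- (q powi (2 * k)) - q powi (-2 * k) = -2 \<longleftrightarrow> int N dvd k"
proof -
  define x where "x = (q ^ 2) powi k"
  have "x \<noteq> 0" using q_nonzero by (simp add: x_def)
  have "q powi (2 * k) = x" "q powi (-2 * k) = inverse x"
    using powi_double[of k] powi_double[of "-k"] by (simp_all add: x_def power_int_minus)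
  then have "- (q powi (2 * k)) - q powi (-2 * k) = -2 \<longleftrightarrow> x + inverse x - 2 = 0"
    by (auto simp: algebra_simps)
  also have "x + inverse x - 2 = (x - 1) * (x - 1) / x"
    using \<open>x \<noteq> 0\<close> by (simp add: field_simps)
  also have "\<dots> = 0 \<longleftrightarrow> x = 1" using \<open>x \<noteq> 0\<close> by simp
  also have "\<dots> \<longleftrightarrow> int N dvd k" by (simp add: x_def powi_eq_1_iff)
  finally show ?thesis .
qed

end

section \<open>The reducible case\<close>

context odd_order_root
begin

lemma exists_vanishing_index:
  assumes "\<not> int N dvd k"
  obtains m where "-Nb \<le> m" "m < Nb" "int N dvd (2 * m - k + 1)"
proof -
  define X where "X = (k - 1) * (Nb + 1) + Nb"
  define m where "m = X mod int N - Nb"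
  have "int N > 0" using N_eq Nb_pos by simp
  then have "0 \<le> X mod int N" "X mod int N < int N" by simp_all
  then have range: "-Nb \<le> m" "m \<le> Nb" unfolding m_def using N_eq by linarith+
  have "2 * m - k + 1 = int N * (k - 1 - 2 * (X div int N))"
    using minus_div_mult_eq_mod[of X "int N", symmetric] N_eq
    by (simp add: m_def X_def algebra_simps)
  then have dvd: "int N dvd (2 * m - k + 1)" by simp
  have "m \<noteq> Nb"
  proof
    assume "m = Nb"
    then have "2 * m - k + 1 = int N - k" using N_eq by simp
    then have "int N dvd int N - k" using dvd by metis
    then show False using assms by (simp add: dvd_diff_right_iff)
  qed
  with range dvd show ?thesis using that by simp
qed

lemma sc_eq_0: "int N dvd (2 * m - k + 1) \<Longrightarrow> sc q k m = 0"
  using powi_eq_powi_uminus_iff[of "2 * m - k + 1"] by (simp add: sc_def algebra_simps)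

lemma rho0_img_span_upto: "-Nb \<le> i \<Longrightarrow> i \<le> m \<Longrightarrow> m \<le> Nb \<Longrightarrow> rho0_img q i \<in> span_upto Nb m"
  by (auto simp: rho0_img_def span_upto_def ub_def)

lemma rhoInf_img_span_upto:
  assumes "-Nb \<le> i" "i \<le> m" "m < Nb" and root: "int N dvd (2 * m - k + 1)"
  shows "rhoInf_img q k Nb i \<in> span_upto Nb m"
proof -
  have "sc q k m = 0" "sc' q k m = 0" using sc_eq_0[OF root] by (simp_all add: sc'_def)
  moreover have "m = 0 \<Longrightarrow> q powi (-k + 1) = q powi (k - 1)"
    using root powi_eq_powi_uminus_iff[of "-k + 1"] by simp
  ultimately show ?thesis using assms
    by (auto simp: rhoInf_img_def span_upto_def ub_def ustar_def)
qed

lemma reducible_if_not_dvd: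
  assumes "\<not> int N dvd k"
  shows "reducible_rep Nb (rho0_img q) (rhoInf_img q k Nb)"
proof -
  obtain m where m: "-Nb \<le> m" "m < Nb" "int N dvd (2 * m - k + 1)"
    using exists_vanishing_index assms by blast
  let ?W = "span_upto Nb m"
  show ?thesis unfolding reducible_rep_def
  proof (intro exI[of _ ?W] conjI ballI)
    show "?W \<subseteq> Vsp Nb" using m by (auto simp: span_upto_def Vsp_def)
    show "is_lin_subspace ?W" by (auto simp: is_lin_subspace_def span_upto_def)
    have "ub (-Nb) \<in> ?W" "ub (-Nb) \<noteq> (\<lambda>j. 0)"
      using m ub_in_span_upto by (auto simp: ub_def fun_eq_iff)
    then show "?W \<noteq> {\<lambda>j. 0}" by auto
    have "ub Nb \<in> Vsp Nb" "ub Nb \<notin> ?W" using m by (auto simp: Vsp_def span_upto_def ub_def)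
    then show "?W \<noteq> Vsp Nb" by auto
  next
    fix v assume "v \<in> ?W"
    then show "lin_op Nb (rho0_img q) v \<in> ?W"
      using m by (intro lin_op_span_upto rho0_img_span_upto) auto
    show "lin_op Nb (rhoInf_img q k Nb) v \<in> ?W"
      using m \<open>v \<in> ?W\<close> by (intro lin_op_span_upto rhoInf_img_span_upto) auto
  qed
qed

end

section \<open>The irreducible case\<close>

context odd_order_root
begin

lemma sc_nonzero:
  assumes "int N dvd k" and "-Nb \<le> i" "i < Nb" "i \<noteq> 0"
  shows "sc q k i \<noteq> 0"
proof -
  have "\<not> int N dvd (2 * i - k + 1)"
  proof
    assume "int N dvd (2 * i - k + 1)"
    then have "int N dvd (2 * i + 1)" using dvd_add[OF _ assms(1)] by fastforce
    moreover have "\<bar>2 * i + 1\<bar> < int N" "2 * i + 1 \<noteq> 0" using assms(2,3) N_eq by presburger+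
    ultimately show False using dvd_small_imp_zero by blast
  qed
  then have "q powi (2 * i - k + 1) \<noteq> q powi (-2 * i + k - 1)"
    using powi_eq_powi_uminus_iff[of "2 * i - k + 1"] by (simp add: algebra_simps)
  moreover have "q powi (2 * i) \<noteq> q powi (-2 * i)"
    using powi_ne_powi_uminus[of "2 * i"] assms(2-4) N_eq by auto
  ultimately show ?thesis by (simp add: sc_def)
qed

lemma sc'_nonzero:
  assumes "int N dvd k" and "0 < i" "i < Nb"
  shows "sc' q k i \<noteq> 0"
proof -
  have "q powi (2 * i + 2) \<noteq> q powi (-2 * i - 2)"
    using powi_ne_powi_uminus[of "2 * i + 2"] assms N_eq by auto
  moreover have "q powi (2 * i) \<noteq> q powi (-2 * i)"
    using powi_ne_powi_uminus[of "2 * i"] assms N_eq by auto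
  ultimately show ?thesis using sc_nonzero[OF assms(1), of i] assms by (simp add: sc'_def)
qed

lemma rhoInf_u0_coeff_nonzero:
  assumes "int N dvd k"
  shows "(q powi 2 - q powi (-2)) * (q powi (-k + 1) - q powi (k - 1)) \<noteq> 0"
proof -
  have "q powi 2 \<noteq> q powi (-2)" using powi_ne_powi_uminus[of 2] N_eq Nb_pos by auto
  moreover have "\<not> int N dvd (-k + 1)"
  proof
    assume "int N dvd (-k + 1)"
    then have "int N dvd 1" using dvd_add[OF _ assms] by fastforce
    then show False using N_eq Nb_pos by simp
  qed
  then have "q powi (-k + 1) \<noteq> q powi (k - 1)" using powi_eq_powi_uminus_iff[of "-k + 1"] by simp
  ultimately show ?thesis by simp
qed

lemma rho0_shift_lam_kernel:
  assumes m: "0 \<le> m" "m \<le> Nb" and x: "x \<in> Vsp Nb"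
    and ker: "rho0_shift Nb q (lam q m) x = (\<lambda>j. 0)" and j: "j \<noteq> -m"
  shows "x j = 0"
proof -
  have eq: "(lam q j - lam q m) * x j + (if j < 0 then x (-j) else 0) = 0" if "\<bar>j\<bar> \<le> Nb" for j
    using fun_cong[OF ker, of j] that by (simp add: rho0_shift_apply[OF x] abs_le_iff)
  have sep: "lam q j \<noteq> lam q m" if "\<bar>j\<bar> \<le> Nb" "j \<noteq> m" "j \<noteq> -m" for j
    using lam_eq_lam_imp[of j m] that m by auto
  have pos: "x p = 0" if "0 < p" "p \<le> Nb" for p
  proof (cases "p = m")
    case True
    then show ?thesis using eq[of "-m"] that by (simp add: lam_uminus)
  next
    case False
    then show ?thesis using eq[of p] sep[of p] that m by auto
  qed
  show ?thesis
  proof (cases "\<bar>j\<bar> \<le> Nb")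
    case False
    then have "j < -Nb \<or> Nb < j" by linarith
    then show ?thesis using x by (auto simp: Vsp_def)
  next
    case in_range: True
    show ?thesis
    proof (cases "0 < j")
      case True
      then show ?thesis using pos in_range by simp
    next
      case False
      then have "(if j < 0 then x (-j) else 0) = 0" using pos[of "-j"] in_range by auto
      moreover have "lam q j \<noteq> lam q m" using sep[of j] in_range False j m by auto
      ultimately show ?thesis using eq[of j] in_range by simp
    qed
  qed
qed

text \<open>On the span of \<open>u\<^sub>m, u\<^sub>-\<^sub>m\<close> the operator \<open>\<rho>(\<alpha>\<^sub>0)\<close> is a Jordan block for \<open>\<lambda>\<^sub>m\<close>, so
  applying \<open>\<rho>(\<alpha>\<^sub>0) - \<lambda>\<^sub>m\<close> twice removes both of these components.\<close>

lemma rho0_shift_lam_twice_support: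
  assumes m: "1 \<le> m" "m \<le> Nb" and x: "x \<in> Vsp Nb" and supp: "\<And>j. m < \<bar>j\<bar> \<Longrightarrow> x j = 0"
    and j: "m - 1 < \<bar>j\<bar>"
  shows "rho0_shift Nb q (lam q m) (rho0_shift Nb q (lam q m) x) j = 0"
proof -
  define y where "y = rho0_shift Nb q (lam q m) x"
  have y: "y \<in> Vsp Nb" using rho0_shift_Vsp[OF x] by (simp add: y_def)
  have y_supp: "y j = 0" if "m < \<bar>j\<bar>" for j
    using supp[of j] supp[of "-j"] that by (simp add: y_def rho0_shift_apply[OF x])
  have "y m = 0" using m by (simp add: y_def rho0_shift_apply[OF x])
  consider "m < \<bar>j\<bar>" | "j = m" | "j = -m" using j by linarith
  then have "rho0_shift Nb q (lam q m) y j = 0"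
  proof cases
    case 1
    then show ?thesis using y_supp[of j] y_supp[of "-j"] by (simp add: rho0_shift_apply[OF y])
  qed (use \<open>y m = 0\<close> m in \<open>auto simp: rho0_shift_apply[OF y] lam_uminus\<close>)
  then show ?thesis by (simp add: y_def)
qed

end

locale rho_invariant_subspace = odd_order_root +
  fixes k :: int and W :: "(int \<Rightarrow> complex) set"
  assumes k_dvd: "int N dvd k"
    and W_Vsp: "W \<subseteq> Vsp Nb"
    and W_subspace: "is_lin_subspace W"
    and rho0_closed: "v \<in> W \<Longrightarrow> lin_op Nb (rho0_img q) v \<in> W"
    and rhoInf_closed: "v \<in> W \<Longrightarrow> lin_op Nb (rhoInf_img q k Nb) v \<in> W"
begin

lemma rho0_shift_mem: "x \<in> W \<Longrightarrow> rho0_shift Nb q \<mu> x \<in> W"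
  using lin_subspace_lincomb[OF W_subspace rho0_closed, of x x 1 "-\<mu>"]
  by (simp add: rho0_shift_def)

lemma ub_mem_if_coeff:
  assumes x: "x \<in> W" and a: "x a \<noteq> 0" and others: "\<And>j. j \<noteq> a \<Longrightarrow> x j \<noteq> 0 \<Longrightarrow> ub j \<in> W"
  shows "ub a \<in> W"
proof -
  define r where "r = (\<lambda>j. x j - x a * ub a j)"
  have "x \<in> Vsp Nb" using x W_Vsp by auto
  then have "r \<in> Vsp Nb" unfolding Vsp_def r_def ub_def by auto
  moreover have "ub j \<in> W" if "r j \<noteq> 0" for j
    using others[of j] that by (cases "j = a") (simp_all add: r_def ub_def)
  ultimately have "r \<in> W" by (rule lin_subspace_mem_if_support[OF W_subspace])
  then have "(\<lambda>j. (1 / x a) * x j + (- 1 / x a) * r j) \<in> W"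
    using lin_subspace_lincomb[OF W_subspace x] by blast
  also have "(\<lambda>j. (1 / x a) * x j + (- 1 / x a) * r j) = ub a"
  proof
    fix j
    show "(1 / x a) * x j + (- 1 / x a) * r j = ub a j"
      using a by (simp add: r_def right_diff_distrib)
  qed
  finally show ?thesis .
qed

lemma ub_mem_if_single_support:
  assumes "x \<in> W" "x \<noteq> (\<lambda>j. 0)" and "\<And>j. j \<noteq> a \<Longrightarrow> x j = 0"
  shows "ub a \<in> W"
proof (rule ub_mem_if_coeff[OF assms(1)])
  show "x a \<noteq> 0" using assms(2,3) by (metis ext)
qed (use assms(3) in blast)

lemma exists_nonpos_ub_mem_bounded:
  "x \<in> W \<Longrightarrow> x \<noteq> (\<lambda>j. 0) \<Longrightarrow> int m \<le> Nb \<Longrightarrow> (\<And>j. int m < \<bar>j\<bar> \<Longrightarrow> x j = 0)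
    \<Longrightarrow> \<exists>j. -Nb \<le> j \<and> j \<le> 0 \<and> ub j \<in> W"
proof (induction m arbitrary: x)
  case 0
  then have "ub 0 \<in> W" by (intro ub_mem_if_single_support[of x]) simp_all
  then show ?case using Nb_pos by (intro exI[of _ 0]) simp
next
  case (Suc m)
  define M where "M = int (Suc m)"
  have M: "0 \<le> M" "1 \<le> M" "M \<le> Nb" using Suc.prems(3) by (simp_all add: M_def)
  have x: "x \<in> Vsp Nb" using Suc.prems(1) W_Vsp by auto
  define y where "y = rho0_shift Nb q (lam q M) x"
  define z where "z = rho0_shift Nb q (lam q M) y"
  have "y \<in> W" "z \<in> W" using rho0_shift_mem Suc.prems(1) by (simp_all add: y_def z_def)
  have y: "y \<in> Vsp Nb" using rho0_shift_Vsp[OF x] by (simp add: y_def)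
  show ?case
  proof (cases "z = (\<lambda>j. 0)")
    case False
    have "z j = 0" if "int m < \<bar>j\<bar>" for j
      using rho0_shift_lam_twice_support[OF M(2,3) x Suc.prems(4)] that
      by (simp add: z_def y_def M_def)
    then show ?thesis using Suc.IH[OF \<open>z \<in> W\<close> False] Suc.prems(3) by simp
  next
    case z0: True
    have "ub (-M) \<in> W"
    proof (cases "y = (\<lambda>j. 0)")
      case True
      then have "rho0_shift Nb q (lam q M) x = (\<lambda>j. 0)" by (simp add: y_def)
      then show ?thesis
        using rho0_shift_lam_kernel[OF M(1,3) x] by (intro ub_mem_if_single_support[OF Suc.prems(1,2)])
    next
      case False
      have "rho0_shift Nb q (lam q M) y = (\<lambda>j. 0)" using z0 by (simp add: z_def)
      then show ?thesis
        using rho0_shift_lam_kernel[OF M(1,3) y] by (intro ub_mem_if_single_support[OF \<open>y \<in> W\<close> False])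
    qed
    then show ?thesis using M by (intro exI[of _ "-M"]) simp
  qed
qed

lemma exists_nonpos_ub_mem:
  assumes "x \<in> W" "x \<noteq> (\<lambda>j. 0)"
  obtains j where "-Nb \<le> j" "j \<le> 0" "ub j \<in> W"
proof -
  have "x j = 0" if "int (nat Nb) < \<bar>j\<bar>" for j
  proof -
    have "j < -Nb \<or> Nb < j" using that Nb_pos by linarith
    then show ?thesis using assms(1) W_Vsp unfolding Vsp_def by blast
  qed
  then show ?thesis using exists_nonpos_ub_mem_bounded[OF assms, of "nat Nb"] Nb_pos that by auto
qed

lemma ub_mem_of_pair_nonpos:
  assumes a: "-Nb \<le> a" "a \<le> 0" and b: "-Nb \<le> b" "b \<le> 0"
    and lam: "lam q a \<noteq> lam q b" and "\<alpha> \<noteq> 0" and y: "(\<lambda>j. \<alpha> * ub a j + \<beta> * ub b j) \<in> W"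
  shows "ub a \<in> W"
proof -
  let ?y = "\<lambda>j. \<alpha> * ub a j + \<beta> * ub b j"
  have "?y \<in> Vsp Nb" using y W_Vsp by auto
  have "a \<noteq> b" using lam by auto
  have z: "rho0_shift Nb q (lam q b) ?y j = (if j = a then (lam q a - lam q b) * \<alpha> else 0)" for j
    unfolding rho0_shift_apply[OF \<open>?y \<in> Vsp Nb\<close>] using a b \<open>a \<noteq> b\<close> by (auto simp: ub_def)
  show ?thesis
    by (rule ub_mem_if_coeff[OF rho0_shift_mem[OF y, of "lam q b"]]) (use z lam \<open>\<alpha> \<noteq> 0\<close> in auto)
qed

lemma ub_succ_mem_neg:
  assumes "-Nb \<le> i" "i < 0" "ub i \<in> W"
  shows "ub (i + 1) \<in> W"
proof -
  define c where "c = max (-Nb) (i - 1)"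
  have c: "-Nb \<le> c" "c \<le> i" using assms by (simp_all add: c_def)
  have "ustar Nb (i - 1) = ub c" using assms by (simp add: ustar_def c_def max_def)
  then have "(\<lambda>j. sc q k i * ub (i + 1) j + sc q k (-i) * ub c j) \<in> W"
    using rhoInf_closed[OF assms(3)] assms Nb_pos by (simp add: lin_op_ub rhoInf_img_def)
  moreover have "lam q (i + 1) \<noteq> lam q c" using lam_eq_lam_imp[of "i + 1" c] assms c by auto
  moreover have "sc q k i \<noteq> 0" using sc_nonzero[OF k_dvd] assms Nb_pos by simp
  ultimately show ?thesis using ub_mem_of_pair_nonpos assms c by simp
qed

lemma ub_pred_mem:
  assumes "-Nb < i" "i \<le> 0" "ub i \<in> W"
  shows "ub (i - 1) \<in> W"
proof (cases "i = 0")
  case True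
  define c1 where "c1 = q powi (k - 1) + q powi (-k + 1)"
  define c2 where "c2 = (q powi 2 - q powi (-2)) * (q powi (-k + 1) - q powi (k - 1))"
  let ?y = "\<lambda>j. c1 * ub (-1) j + c2 * ub 1 j"
  have y: "?y \<in> W"
    using rhoInf_closed[OF assms(3)] True Nb_pos by (simp add: lin_op_ub rhoInf_img_def c1_def c2_def)
  then have "?y \<in> Vsp Nb" using W_Vsp by auto
  have z: "rho0_shift Nb q (lam q 1) ?y j = (if j = -1 then c2 else 0)" for j
    unfolding rho0_shift_apply[OF \<open>?y \<in> Vsp Nb\<close>] using Nb_pos by (auto simp: ub_def lam_uminus)
  have "ub (-1) \<in> W"
    by (rule ub_mem_if_coeff[OF rho0_shift_mem[OF y, of "lam q 1"]])
      (use z rhoInf_u0_coeff_nonzero[OF k_dvd] in \<open>auto simp: c2_def\<close>)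
  then show ?thesis using True by simp
next
  case False
  have "ustar Nb (i - 1) = ub (i - 1)" using assms by (simp add: ustar_def)
  then have "(\<lambda>j. sc q k (-i) * ub (i - 1) j + sc q k i * ub (i + 1) j) \<in> W"
    using rhoInf_closed[OF assms(3)] assms False by (simp add: lin_op_ub rhoInf_img_def add.commute)
  moreover have "lam q (i - 1) \<noteq> lam q (i + 1)" using lam_eq_lam_imp[of "i - 1" "i + 1"] assms False by auto
  moreover have "sc q k (-i) \<noteq> 0" using sc_nonzero[OF k_dvd, of "-i"] assms False by simp
  ultimately show ?thesis using ub_mem_of_pair_nonpos[of "i - 1" "i + 1"] assms False by simp
qed

lemma ub_nonpos_mem:
  assumes a: "-Nb \<le> a" "a \<le> 0" "ub a \<in> W" and b: "-Nb \<le> b" "b \<le> 0"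
  shows "ub b \<in> W"
proof (cases "a \<le> b")
  case True
  have "b \<le> 0 \<longrightarrow> ub b \<in> W" using True
  proof (induction b rule: int_ge_induct)
    case base
    then show ?case using a by simp
  next
    case (step i)
    then show ?case using ub_succ_mem_neg a by auto
  qed
  then show ?thesis using b by simp
next
  case False
  then have "b \<le> a" by simp
  then have "-Nb \<le> b \<longrightarrow> ub b \<in> W"
  proof (induction b rule: int_le_induct)
    case base
    then show ?case using a by simp
  next
    case (step i)
    then show ?case using ub_pred_mem a by auto
  qed
  then show ?thesis using b by simp
qed

lemma ub_succ_mem_pos:
  assumes "0 \<le> i" "i < Nb" and below: "\<And>l. -Nb \<le> l \<Longrightarrow> l \<le> i \<Longrightarrow> ub l \<in> W"
  shows "ub (i + 1) \<in> W"
proof -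
  have "ub i \<in> W" using below assms by simp
  moreover have "lin_op Nb (rhoInf_img q k Nb) (ub i) = rhoInf_img q k Nb i"
    using assms by (intro lin_op_ub) auto
  ultimately have y: "rhoInf_img q k Nb i \<in> W" using rhoInf_closed by metis
  have "rhoInf_img q k Nb i (i + 1) \<noteq> 0"
  proof (cases "i = 0")
    case True
    then show ?thesis using rhoInf_u0_coeff_nonzero[OF k_dvd] by (simp add: rhoInf_img_def ub_def)
  next
    case False
    then show ?thesis using sc'_nonzero[OF k_dvd, of i] assms by (simp add: rhoInf_img_def ub_def ustar_def)
  qed
  moreover have "-Nb \<le> j \<and> j \<le> i" if "j \<noteq> i + 1" "rhoInf_img q k Nb i j \<noteq> 0" for j
  proof (cases "i = 0")
    case True
    then show ?thesis using that Nb_pos by (simp add: rhoInf_img_def ub_def split: if_splits)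
  next
    case False
    then have "j \<in> {-i - 1, -i + 1, i - 1}"
      using that assms by (simp add: rhoInf_img_def ub_def ustar_def split: if_splits)
    then show ?thesis using assms False by auto
  qed
  ultimately show ?thesis using ub_mem_if_coeff[OF y] below by blast
qed

lemma ub_mem:
  assumes a: "-Nb \<le> a" "a \<le> 0" "ub a \<in> W" and l: "-Nb \<le> l" "l \<le> Nb"
  shows "ub l \<in> W"
proof -
  have "d \<le> Nb \<longrightarrow> (\<forall>l. -Nb \<le> l \<longrightarrow> l \<le> d \<longrightarrow> ub l \<in> W)" if "0 \<le> d" for d
    using that
  proof (induction d rule: int_ge_induct)
    case base
    then show ?case using ub_nonpos_mem[OF a] by blast
  next
    case (step d)
    show ?case
    proof (intro impI allI)
      fix l assume "d + 1 \<le> Nb" "-Nb \<le> l" "l \<le> d + 1"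
      have below: "ub l' \<in> W" if "-Nb \<le> l'" "l' \<le> d" for l'
        using step.IH that \<open>d + 1 \<le> Nb\<close> by simp
      show "ub l \<in> W"
      proof (cases "l \<le> d")
        case True
        then show ?thesis using below \<open>-Nb \<le> l\<close> by blast
      next
        case False
        then have "l = d + 1" using \<open>l \<le> d + 1\<close> by simp
        then show ?thesis using ub_succ_mem_pos[of d] below step.hyps \<open>d + 1 \<le> Nb\<close> by simp
      qed
    qed
  qed
  from this[of Nb] show ?thesis using l Nb_pos by simp
qed

lemma W_eq_Vsp:
  assumes "W \<noteq> {\<lambda>j. 0}"
  shows "W = Vsp Nb"
proof -
  have "(\<lambda>j. 0) \<in> W" using W_subspace by (simp add: is_lin_subspace_def)
  then obtain x where "x \<in> W" "x \<noteq> (\<lambda>j. 0)" using assms by blast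
  then obtain a where a: "-Nb \<le> a" "a \<le> 0" "ub a \<in> W" by (rule exists_nonpos_ub_mem)
  have "v \<in> W" if "v \<in> Vsp Nb" for v
  proof (rule lin_subspace_mem_if_support[OF W_subspace that])
    fix j assume "v j \<noteq> 0"
    then have "\<not> (j < -Nb \<or> Nb < j)" using that unfolding Vsp_def by blast
    then show "ub j \<in> W" using ub_mem[OF a] by simp
  qed
  then show ?thesis using W_Vsp by blast
qed

end

context odd_order_root
begin

lemma irreducible_if_dvd:
  assumes "int N dvd k"
  shows "\<not> reducible_rep Nb (rho0_img q) (rhoInf_img q k Nb)"
proof
  assume "reducible_rep Nb (rho0_img q) (rhoInf_img q k Nb)"
  then obtain W where W: "W \<subseteq> Vsp Nb" "is_lin_subspace W" "W \<noteq> {\<lambda>j. 0}" "W \<noteq> Vsp Nb"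
      "\<forall>v\<in>W. lin_op Nb (rho0_img q) v \<in> W" "\<forall>v\<in>W. lin_op Nb (rhoInf_img q k Nb) v \<in> W"
    unfolding reducible_rep_def by blast
  then interpret rho_invariant_subspace q N Nb k W using assms by unfold_locales auto
  show False using W_eq_Vsp W(3,4) by blast
qed

end

theorem mainTheorem12:
  fixes q :: complex and k :: int and n N :: nat and Nb :: int and w :: complex
  assumes "\<exists>m>0. q ^ m = (1::complex)"
    and "n = mult_ord (q ^ 2)" and "N = mult_ord (q ^ 4)"
    and "odd n" and "q ^ 4 \<noteq> 1"
    and "Nb = (int N - 1) div 2"
    and "w = - (q powi (2*k)) - q powi (-2*k)"
  shows "reducible_rep Nb (rho0_img q) (rhoInf_img q k Nb) \<longleftrightarrow> w \<noteq> -2"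
proof -
  interpret odd_order_root q N Nb
    using assms(1-6) by (rule odd_order_root_if_odd_mult_ord)
  have "w = -2 \<longleftrightarrow> int N dvd k" using assms(7) w_eq_neg2_iff by simp
  then show ?thesis using reducible_if_not_dvd irreducible_if_dvd by blast
qed

end
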